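(* Let $n\geq 1$ and let $\mathrm{Aut}^0_{\mathrm{hol}}(\mathbb C^n)$ be the set of biholomorphic maps $F:\mathbb C^n\to\mathbb C^n$ with $F(0)=0$ and $DF(0)=I$. The map $\mathfrak{X}^n_0:\mathrm{Aut}^0_{\mathrm{hol}}(\mathbb C^n)\to\mathfrak{L}^n(PSH)$, $\mathfrak{X}^n_0(F)=L(\log\|F\|)$ (the Levi matrix of $z\mapsto\log\|F(z)\|$ on $\mathbb C^n\setminus\{0\}$), is injective. Equivalently, if $F,G\in \mathrm{Aut}^0_{\mathrm{hol}}(\mathbb C^n)$ and $\log\|F\|-\log\|G\|$ is pluriharmonic on $\mathbb C^n\setminus\{0\}$, then $F=G$.
   Context: $\|\cdot\|$ is the standard Hermitian norm on $\mathbb C^n$. For a real-valued $C^2$ function $g$ on an open subset of $\mathbb C^n$, its Levi matrix is $L(g)=\big(\partial^2 g/\partial z_i\partial\bar z_j\big)_{i,j}$; $g$ is plurisubharmonic if $L(g)\ge0$ and pluriharmonic if $L(g)=0$ everywhere. $\mathfrak{L}^n(PSH)$ denotes the set of Levi matrices of real-analytic plurisubharmonic functions on $\mathbb C^n\setminus\{0\}$. *)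

theory Defs
  imports "HOL-Analysis.Analysis"
begin

definition holo_on :: "(complex ^ 'n \<Rightarrow> complex ^ 'm) \<Rightarrow> (complex ^ 'n) set \<Rightarrow> bool" where
  "holo_on F S \<longleftrightarrow> open S \<and> (\<forall>z\<in>S. \<exists>L. (F has_derivative L) (at z) \<and>
       (\<forall>c v. L (c *s v) = c *s L v))"

definition biholomorphic :: "(complex ^ 'n \<Rightarrow> complex ^ 'n) \<Rightarrow> bool" where
  "biholomorphic F \<longleftrightarrow> bij F \<and> holo_on F UNIV \<and> holo_on (inv F) UNIV"

definition Aut0_hol :: "(complex ^ 'n \<Rightarrow> complex ^ 'n) set" where
  "Aut0_hol = {F. biholomorphic F \<and> F 0 = 0 \<and> (F has_derivative id) (at 0)}"

definition dirderiv :: "complex ^ 'n \<Rightarrow> (complex ^ 'n \<Rightarrow> real) \<Rightarrow> complex ^ 'n \<Rightarrow> real" where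
  "dirderiv v g z = deriv (\<lambda>t::real. g (z + t *\<^sub>R v)) 0"

text \<open>Levi matrix entry  d^2 g / dz_i d(conj z_j), written via real partial derivatives
  with z_k = x_k + i y_k:  (1/4)(g_{x_i x_j} + g_{y_i y_j} + i (g_{x_i y_j} - g_{y_i x_j})).\<close>
definition levi :: "(complex ^ 'n \<Rightarrow> real) \<Rightarrow> complex ^ 'n \<Rightarrow> complex ^ 'n ^ 'n" where
  "levi g z = (\<chi> i j.
     let ex = (\<lambda>k. axis k (1::complex)); ey = (\<lambda>k. axis k \<i>) in
     (1/4) * (complex_of_real (dirderiv (ex i) (dirderiv (ex j) g) z
                             + dirderiv (ey i) (dirderiv (ey j) g) z)
              + \<i> * complex_of_real (dirderiv (ex i) (dirderiv (ey j) g) z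
                             - dirderiv (ey i) (dirderiv (ex j) g) z)))"

definition X0 :: "(complex ^ 'n \<Rightarrow> complex ^ 'n) \<Rightarrow> complex ^ 'n \<Rightarrow> complex ^ 'n ^ 'n" where
  "X0 F = (\<lambda>z. if z = 0 then 0 else levi (\<lambda>w. ln (norm (F w))) z)"

end

theory Submission
  imports Defs "HOL-Complex_Analysis.Complex_Analysis"
begin

text \<open>
  For a biholomorphism F fixing 0 and z \<noteq> 0, the Levi matrix of log \<parallel>F\<parallel> at z is
  (\<langle>\<partial>_i F, \<partial>_j F\<rangle> \<parallel>F\<parallel>^2 - \<langle>\<partial>_i F, F\<rangle> \<langle>F, \<partial>_j F\<rangle>) / (2 \<parallel>F\<parallel>^4); as DF(z) is invertible, its kernel consists
  of the vectors x with DF(z) x parallel to F(z). If F and G have the same Levi matrices, apply this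
  to x = DG(z)^-1 G(z), which lies in the kernel for G: for K = F \<circ> G^-1 one gets that DK(y) y is
  parallel to K(y) for every y \<noteq> 0. On a complex line \<Gamma>(t) = K(t w) this says that t \<Gamma>'(t) is parallel
  to \<Gamma>(t), so all Wronskians of the components of \<Gamma> vanish and \<Gamma>(t) = \<phi>(t) w. Then \<phi> is an injective
  entire function with \<phi>(0) = 0 and \<phi>'(0) = 1, hence the identity, because injective entire functions
  are affine.
\<close>

section \<open>Holomorphic functions of one variable\<close>

lemma continuous_on_contour_integral_param:
  fixes f :: "'a::metric_space \<Rightarrow> complex \<Rightarrow> complex"
  assumes cont: "continuous_on (S \<times> path_image \<gamma>) (\<lambda>(s,u). f s u)"
    and \<gamma>: "valid_path \<gamma>"
    and B: "\<And>t. t \<in> {0..1} \<Longrightarrow> norm (vector_derivative \<gamma> (at t)) \<le> B"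
    and integrable: "\<And>s. s \<in> S \<Longrightarrow> f s contour_integrable_on \<gamma>"
  shows "continuous_on S (\<lambda>s. contour_integral \<gamma> (f s))"
  unfolding continuous_on_def
proof
  fix s0 assume s0: "s0 \<in> S"
  have K: "compact (path_image \<gamma>)"
    using \<gamma> by (rule compact_valid_path_image)
  show "((\<lambda>s. contour_integral \<gamma> (f s)) \<longlongrightarrow> contour_integral \<gamma> (f s0)) (at s0 within S)"
  proof (cases "trivial_limit (at s0 within S)")
    case False
    have "uniform_limit (path_image \<gamma>) f (f s0) (at s0 within S)"
      unfolding uniform_limit_iff
    proof (intro allI impI)
      fix e :: real assume "e > 0"
      then obtain X where X: "s0 \<in> X" "open X"
        and close: "\<forall>s\<in>X \<inter> S. \<forall>u\<in>path_image \<gamma>. dist (f s u) (f s0 u) \<le> e / 2"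
        using continuous_on_prod_compactE[OF cont K s0, of "e / 2"] by auto
      show "\<forall>\<^sub>F s in at s0 within S. \<forall>u\<in>path_image \<gamma>. dist (f s u) (f s0 u) < e"
      proof (rule eventually_at_topological[THEN iffD2], intro exI conjI ballI impI)
        show "open X" "s0 \<in> X" by (fact X)+
        fix s u assume "s \<in> X" "s \<noteq> s0" "s \<in> S" "u \<in> path_image \<gamma>"
        then have "dist (f s u) (f s0 u) \<le> e / 2"
          using close by blast
        then show "dist (f s u) (f s0 u) < e"
          using \<open>e > 0\<close> by linarith
      qed
    qed
    moreover have "\<forall>\<^sub>F s in at s0 within S. f s contour_integrable_on \<gamma>"
      using integrable by (simp add: eventually_at_filter)
    ultimately show ?thesis
      using contour_integral_uniform_limit(2)[OF _ _ B \<gamma> False] by blast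
  qed (simp add: tendsto_def trivial_limit_eq)
qed

lemma holomorphic_on_contour_integral_circlepath_param:
  fixes f :: "complex \<Rightarrow> complex \<Rightarrow> complex"
  assumes cont: "continuous_on (UNIV \<times> sphere z r) (\<lambda>(s,u). f s u)"
    and hol: "\<And>u. (\<lambda>s. f s u) holomorphic_on UNIV"
    and "0 \<le> r"
  shows "(\<lambda>s. contour_integral (circlepath z r) (f s)) holomorphic_on UNIV"
proof -
  let ?C = "circlepath z r"
  define I where "I = (\<lambda>s. contour_integral ?C (f s))"
  have r_abs: "\<bar>r\<bar> = r"
    using \<open>0 \<le> r\<close> by simp
  have bound: "norm (vector_derivative ?C (at t)) \<le> 2 * pi * r" for t
    using \<open>0 \<le> r\<close> by (simp add: vector_derivative_circlepath norm_mult)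
  have "continuous_on UNIV I"
    unfolding I_def
  proof (rule continuous_on_contour_integral_param[OF _ _ bound])
    show "f s contour_integrable_on ?C" for s
      by (rule contour_integrable_continuous_circlepath)
         (rule continuous_on_compose2[OF cont, of _ "\<lambda>u. (s,u)", simplified];
          auto simp: r_abs intro: continuous_intros)
  qed (simp_all add: r_abs cont)
  then have "I analytic_on UNIV"
  proof (rule Morera_triangle[OF _ open_UNIV], intro impI)
    fix a b c :: complex
    have swap: "contour_integral (linepath p q) I
        = contour_integral ?C (\<lambda>u. contour_integral (linepath p q) (\<lambda>s. f s u))" for p q
      unfolding I_def
      by (rule contour_integral_swap)
         (auto simp: r_abs vector_derivative_circlepath intro!: continuous_intros continuous_on_subset[OF cont])
    have integrable: "(\<lambda>u. contour_integral (linepath p q) (\<lambda>s. f s u)) contour_integrable_on ?C" for p q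
    proof (intro contour_integrable_continuous_circlepath continuous_on_contour_integral_param)
      have "continuous_on (closed_segment p q \<times> sphere z r) (\<lambda>(s,u). f s u)"
        by (rule continuous_on_subset[OF cont]) auto
      then show "continuous_on (path_image ?C \<times> path_image (linepath p q)) (\<lambda>(u,s). f s u)"
        using continuous_on_swap_args[of "closed_segment p q" "sphere z r" f] by (simp add: r_abs)
      show "(\<lambda>s. f s u) contour_integrable_on linepath p q" for u
        by (intro contour_integrable_continuous_linepath holomorphic_on_imp_continuous_on
              holomorphic_on_subset[OF hol]) simp
    qed auto
    have triangle: "contour_integral (linepath a b) (\<lambda>s. f s u) + contour_integral (linepath b c) (\<lambda>s. f s u)
          + contour_integral (linepath c a) (\<lambda>s. f s u) = 0" for u
      by (rule has_chain_integral_chain_integral3[OF Cauchy_theorem_triangle[OF holomorphic_on_subset[OF hol]]])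
         simp
    show "contour_integral (linepath a b) I + contour_integral (linepath b c) I
        + contour_integral (linepath c a) I = 0"
      unfolding swap
      by (subst contour_integral_add[symmetric], (intro integrable contour_integrable_add)+)+
         (simp add: triangle)
  qed
  then show ?thesis
    by (simp add: I_def analytic_imp_holomorphic)
qed

lemma separately_holomorphic_deriv_holomorphic:
  fixes \<Phi> :: "complex \<Rightarrow> complex \<Rightarrow> complex"
  assumes cont: "continuous_on UNIV (\<lambda>(s,t). \<Phi> s t)"
    and hol1: "\<And>t. (\<lambda>s. \<Phi> s t) holomorphic_on UNIV"
    and hol2: "\<And>s. \<Phi> s holomorphic_on UNIV"
  shows "(\<lambda>s. deriv (\<Phi> s) t0) holomorphic_on UNIV"
proof -
  define f where "f = (\<lambda>s u. \<Phi> s u / (u - t0)^2)"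
  have deriv_eq: "deriv (\<Phi> s) t0 = contour_integral (circlepath t0 1) (f s) / (2 * pi * \<i>)" for s
  proof -
    have "((\<lambda>u. \<Phi> s u / (u - t0) ^ Suc 1) has_contour_integral
        (2 * pi * \<i> / fact 1 * (deriv ^^ 1) (\<Phi> s) t0)) (circlepath t0 1)"
      by (rule Cauchy_has_contour_integral_higher_derivative_circlepath)
         (auto intro: holomorphic_on_imp_continuous_on holomorphic_on_subset[OF hol2])
    then have "(f s has_contour_integral (2 * pi * \<i> * deriv (\<Phi> s) t0)) (circlepath t0 1)"
      by (simp add: f_def power2_eq_square)
    then show ?thesis
      by (simp add: contour_integral_unique)
  qed
  have "(\<lambda>s. contour_integral (circlepath t0 1) (f s)) holomorphic_on UNIV"
  proof (rule holomorphic_on_contour_integral_circlepath_param)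
    show "continuous_on (UNIV \<times> sphere t0 1) (\<lambda>(s,u). f s u)"
      unfolding f_def case_prod_unfold
      by (intro continuous_intros continuous_on_subset[OF cont[unfolded case_prod_unfold]]) auto
    show "(\<lambda>s. f s u) holomorphic_on UNIV" for u
      by (cases "u = t0") (auto simp: f_def intro!: holomorphic_intros hol1)
  qed simp
  then show ?thesis
    unfolding deriv_eq by (intro holomorphic_intros) auto
qed

lemma entire_inj_inverse_not_dense:
  fixes f :: "complex \<Rightarrow> complex"
  assumes hol: "f holomorphic_on UNIV" and inj: "inj f"
  shows "closure ((f \<circ> inverse) ` (ball 0 1 - {0})) \<noteq> UNIV"
proof -
  have "\<not> f constant_on UNIV"
  proof
    assume "f constant_on UNIV"
    then have "f 0 = f 1"
      by (auto simp: constant_on_def)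
    then show False
      using injD[OF inj, of 0 1] by simp
  qed
  then have "open (f ` ball 0 1)"
    by (rule open_mapping_thm[OF hol open_UNIV connected_UNIV open_ball subset_UNIV])
  moreover have "f ` ball 0 1 \<inter> (f \<circ> inverse) ` (ball 0 1 - {0}) = {}"
  proof -
    have "f v \<noteq> (f \<circ> inverse) w" if "v \<in> ball 0 1" "w \<in> ball 0 1 - {0}" for v w :: complex
    proof
      assume "f v = (f \<circ> inverse) w"
      then have "f v = f (inverse w)"
        by simp
      then have "v = inverse w"
        by (rule injD[OF inj])
      moreover have "norm (inverse w) > 1"
        using that by (simp add: norm_inverse one_less_inverse)
      ultimately show False using that by simp
    qed
    then show ?thesis by blast
  qed
  ultimately have "f ` ball 0 1 \<inter> closure ((f \<circ> inverse) ` (ball 0 1 - {0})) = {}"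
    by (simp add: open_Int_closure_eq_empty)
  moreover have "f 0 \<in> f ` ball 0 1"
    by simp
  ultimately show ?thesis
    by blast
qed

lemma entire_inj_imp_polyfun:
  fixes f :: "complex \<Rightarrow> complex"
  assumes hol: "f holomorphic_on UNIV" and inj: "inj f"
  obtains a n where "\<And>z. f z = (\<Sum>i\<le>n. a i * z^i)"
proof -
  have hol_inverse: "(f \<circ> inverse) holomorphic_on ball 0 1 - {0}"
    by (intro holomorphic_on_compose holomorphic_intros holomorphic_on_subset[OF hol]) auto
  have "(\<exists>l. ((f \<circ> inverse) \<longlongrightarrow> l) (at 0)) \<or> (\<exists>l. ((inverse \<circ> f \<circ> inverse) \<longlongrightarrow> l) (at 0))"
  proof (rule ccontr)
    assume "\<not> ?thesis"
    then have "closure ((f \<circ> inverse) ` (ball 0 1 - {0})) = UNIV"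
      by (intro Casorati_Weierstrass[OF open_ball _ hol_inverse]) (auto simp: o_assoc)
    with entire_inj_inverse_not_dense[OF hol inj] show False
      by simp
  qed
  then show thesis
  proof
    assume "\<exists>l. ((f \<circ> inverse) \<longlongrightarrow> l) (at 0)"
    then obtain l where "(f \<longlongrightarrow> l) at_infinity"
      by (auto simp: lim_at_infinity_0)
    then have "f z = (\<Sum>i\<le>0. (\<lambda>_. l) i * z^i)" for z
      using Liouville_weak[OF hol] by simp
    then show thesis by (rule that)
  next
    assume "\<exists>l. ((inverse \<circ> f \<circ> inverse) \<longlongrightarrow> l) (at 0)"
    then obtain l where "((inverse \<circ> f) \<longlongrightarrow> l) at_infinity"
      by (auto simp: lim_at_infinity_0)
    then show thesis
      using pole_at_infinity[OF hol] that by blast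
  qed
qed

lemma polyfun_nonvanishing_imp_const:
  fixes a :: "nat \<Rightarrow> complex"
  assumes "\<And>z. (\<Sum>i\<le>n. a i * z^i) \<noteq> 0"
  shows "(\<Sum>i\<le>n. a i * z^i) = a 0"
proof -
  have "\<not> (a 0 = 0 \<or> (\<exists>i\<in>{1..n}. a i \<noteq> 0))"
    using fundamental_theorem_of_algebra assms by metis
  then show ?thesis
    using polyfun_eq_const[of a n "a 0"] by auto
qed

lemma entire_inj_imp_affine:
  fixes f :: "complex \<Rightarrow> complex"
  assumes hol: "f holomorphic_on UNIV" and inj: "inj f"
  shows "f z = f 0 + deriv f 0 * z"
proof -
  obtain a n where f_poly: "\<And>z. f z = (\<Sum>i\<le>n. a i * z^i)"
    using entire_inj_imp_polyfun[OF hol inj] by blast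
  obtain b where b: "\<forall>z. (\<Sum>i\<le>n. a i * z^i) = (z - 1) * (\<Sum>i<n. b i * z^i) + (\<Sum>i\<le>n. a i * 1^i)"
    using polyfun_linear_factor by blast
  define r where "r = (\<lambda>z. \<Sum>i<n. b i * z^i)"
  define c where "c = f 1"
  have f_factor: "f = (\<lambda>z. (z - 1) * r z + c)"
    using b by (simp add: fun_eq_iff f_poly r_def c_def)
  have "deriv f 1 = r 1"
    unfolding f_factor r_def
    by (rule DERIV_imp_deriv) (auto intro!: derivative_eq_intros)
  moreover have "deriv f 1 \<noteq> 0"
    using holomorphic_injective_imp_regular[OF hol open_UNIV] inj by simp
  ultimately have r_nonzero: "r \<xi> \<noteq> 0" for \<xi>
  proof (cases "\<xi> = 1")
    case False
    have "f \<xi> \<noteq> f 1"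
      using False injD[OF inj, of \<xi> 1] by blast
    then show ?thesis
      by (auto simp: f_factor)
  qed simp
  have r_const: "r z = r 0" for z
  proof (cases n)
    case 0
    then show ?thesis using r_nonzero by (simp add: r_def)
  next
    case (Suc m)
    then have "r = (\<lambda>z. \<Sum>i\<le>m. b i * z^i)"
      by (simp add: r_def lessThan_Suc_atMost)
    then show ?thesis
      using polyfun_nonvanishing_imp_const[of b m] r_nonzero by simp
  qed
  have "f z = r 0 * z + (c - r 0)" for z
    using r_const[of z] by (simp add: f_factor algebra_simps)
  then have "f = (\<lambda>z. r 0 * z + (c - r 0))"
    by blast
  moreover have "deriv (\<lambda>z. r 0 * z + (c - r 0)) 0 = r 0"
    by (rule DERIV_imp_deriv) (auto intro!: derivative_eq_intros)
  ultimately show ?thesis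
    by simp
qed

lemma entire_inj_tangent_to_id_eq_id:
  fixes f :: "complex \<Rightarrow> complex"
  assumes "f holomorphic_on UNIV" "inj f" "f 0 = 0" "(f has_field_derivative 1) (at 0)"
  shows "f z = z"
  using entire_inj_imp_affine[OF assms(1,2)] assms(3) DERIV_imp_deriv[OF assms(4)] by simp

lemma simple_zero_isolated:
  fixes g :: "complex \<Rightarrow> complex"
  assumes "(g has_field_derivative b) (at 0)" and "g 0 = 0" and "b \<noteq> 0"
  obtains r where "r > 0" and "\<And>t. t \<in> ball 0 r - {0} \<Longrightarrow> g t \<noteq> 0"
proof -
  have "((\<lambda>t. g t / t) \<longlongrightarrow> b) (at 0)"
    using assms(1,2) by (simp add: has_field_derivative_iff)
  then have "\<forall>\<^sub>F t in at 0. g t / t \<noteq> 0"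
    using \<open>b \<noteq> 0\<close> by (rule tendsto_imp_eventually_ne)
  then obtain r where "r > 0" and "\<And>t. t \<noteq> 0 \<Longrightarrow> dist t 0 < r \<Longrightarrow> g t / t \<noteq> 0"
    unfolding eventually_at by blast
  with that show thesis
    by (simp add: dist_norm)
qed

lemma wronskian_zero_imp_quotient_constant:
  fixes f g f' g' :: "complex \<Rightarrow> complex"
  assumes df: "\<And>t. (f has_field_derivative f' t) (at t)"
    and dg: "\<And>t. (g has_field_derivative g' t) (at t)"
    and W: "\<And>t. f t * g' t - g t * f' t = 0"
    and S: "connected S" "open S" and g_nonzero: "\<And>t. t \<in> S \<Longrightarrow> g t \<noteq> 0"
  obtains c where "\<And>t. t \<in> S \<Longrightarrow> f t / g t = c"
proof (rule DERIV_zero_connected_constant[OF S finite.emptyI])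
  have deriv_quotient: "((\<lambda>t. f t / g t) has_field_derivative 0) (at t)" if "t \<in> S" for t
  proof -
    have "f' t * g t - f t * g' t = 0"
      using W[of t] by (simp add: algebra_simps)
    then show ?thesis
      using DERIV_divide[OF df dg g_nonzero[OF that]] by simp
  qed
  then show "continuous_on S (\<lambda>t. f t / g t)"
    by (blast intro: continuous_at_imp_continuous_on DERIV_isCont)
  show "\<forall>t\<in>S - {}. ((\<lambda>t. f t / g t) has_field_derivative 0) (at t)"
    using deriv_quotient by blast
qed (use that in blast)

lemma wronskian_zero_imp_proportional:
  fixes f g f' g' :: "complex \<Rightarrow> complex"
  assumes df: "\<And>t. (f has_field_derivative f' t) (at t)"
    and dg: "\<And>t. (g has_field_derivative g' t) (at t)"
    and f0: "f 0 = 0" and g0: "g 0 = 0" and g'0: "g' 0 \<noteq> 0"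
    and W: "\<And>t. f t * g' t - g t * f' t = 0"
  shows "g' 0 * f t = f' 0 * g t"
proof -
  obtain r where "r > 0" and g_nonzero: "\<And>t. t \<in> ball 0 r - {0} \<Longrightarrow> g t \<noteq> 0"
    using simple_zero_isolated[OF dg g0 g'0] by blast
  define S where "S = ball (0::complex) r - {0}"
  have "connected S" "open S"
    by (auto simp: S_def connected_punctured_ball)
  moreover have "g t \<noteq> 0" if "t \<in> S" for t
    using that g_nonzero by (simp add: S_def)
  ultimately obtain c where c: "\<And>t. t \<in> S \<Longrightarrow> f t / g t = c"
    using wronskian_zero_imp_quotient_constant[OF df dg W] by blast
  have lim: "((\<lambda>t. (f t / t) / (g t / t)) \<longlongrightarrow> f' 0 / g' 0) (at 0)"
    using df[of 0] dg[of 0] g'0 by (intro tendsto_divide) (simp_all add: has_field_derivative_iff f0 g0)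
  have eventually_c: "\<forall>\<^sub>F t in at 0. (f t / t) / (g t / t) = c"
    using eventually_at_ball'[OF \<open>r > 0\<close>, of 0 UNIV]
  proof eventually_elim
    case (elim t)
    then have "t \<in> S" by (simp add: S_def)
    then show ?case
      using c[of t] by (simp add: S_def)
  qed
  have "((\<lambda>t. c) \<longlongrightarrow> f' 0 / g' 0) (at (0::complex))"
    using tendsto_cong[OF eventually_c] lim by (rule iffD1)
  then have "c = f' 0 / g' 0"
    by (simp add: tendsto_const_iff)
  then have on_S: "g' 0 * f t = f' 0 * g t" if "t \<in> S" for t
    using c[OF that] g_nonzero[of t] g'0 that by (simp add: S_def field_simps)
  have "f holomorphic_on UNIV" "g holomorphic_on UNIV"
    using df dg by (auto simp: holomorphic_on_def field_differentiable_def intro: has_field_derivative_at_within)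
  then have "(\<lambda>t. g' 0 * f t) holomorphic_on UNIV" "(\<lambda>t. f' 0 * g t) holomorphic_on UNIV"
    by (auto intro: holomorphic_intros)
  moreover have "complex_of_real (r / 2) \<in> S"
    using \<open>r > 0\<close> by (simp add: S_def)
  then have "S \<noteq> {}"
    by blast
  ultimately show ?thesis
    using analytic_continuation_open[of S UNIV "\<lambda>t. g' 0 * f t" "\<lambda>t. f' 0 * g t"] on_S \<open>open S\<close>
    by blast
qed

section \<open>Holomorphic maps of \<complex>^n\<close>

lemma norm_vector_smult: "norm (c *s x) = norm c * norm (x :: 'a::real_normed_div_algebra ^ 'n)"
  unfolding norm_vec_def by (simp add: L2_set_right_distrib norm_mult)

lemma bounded_linear_vector_smult_left: "bounded_linear (\<lambda>c::'a::real_normed_field. c *s x)"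
  by (rule bounded_linear_intro[of _ "norm x"])
     (auto simp: vector_sadd_rdistrib norm_vector_smult vec_eq_iff mult_ac)

lemma scaleR_eq_of_real_smult: "r *\<^sub>R x = of_real r *s (x :: complex ^ 'n)"
  by (simp add: vec_eq_iff) (simp add: scaleR_conv_of_real)

lemma holo_on_frechet_derivative:
  assumes "holo_on F UNIV"
  shows "(F has_derivative frechet_derivative F (at w)) (at w)"
    and "frechet_derivative F (at w) (c *s v) = c *s frechet_derivative F (at w) v"
proof -
  obtain L where L: "(F has_derivative L) (at w)" "\<And>c v. L (c *s v) = c *s L v"
    using assms unfolding holo_on_def by blast
  moreover from L(1) have "L = frechet_derivative F (at w)"
    by (rule frechet_derivative_at)
  ultimately show "(F has_derivative frechet_derivative F (at w)) (at w)"
    and "frechet_derivative F (at w) (c *s v) = c *s frechet_derivative F (at w) v"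
    by auto
qed

lemma holo_on_clinear_frechet_derivative:
  assumes "holo_on F UNIV"
  shows "Vector_Spaces.linear (*s) (*s) (frechet_derivative F (at w))"
  using has_derivative_linear[OF holo_on_frechet_derivative(1)[OF assms]]
    holo_on_frechet_derivative(2)[OF assms]
  by (auto simp: Vector_Spaces.linear_iff linear_add intro: vec.vector_space_axioms)

lemma clinear_expansion:
  fixes A :: "'a::field ^ 'n \<Rightarrow> 'a ^ 'm"
  assumes "Vector_Spaces.linear (*s) (*s) A"
  shows "A x = (\<Sum>j\<in>UNIV. x $ j *s A (axis j 1))"
proof -
  interpret A: Vector_Spaces.linear "(*s)" "(*s)" A by fact
  have "A x = A (\<Sum>j\<in>UNIV. x $ j *s axis j 1)"
    by (simp add: basis_expansion)
  then show ?thesis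
    by (simp add: A.sum A.scale)
qed

lemma holo_on_compose:
  assumes F: "holo_on F UNIV" and G: "holo_on G UNIV"
  shows "holo_on (F \<circ> G) UNIV"
    and "frechet_derivative (F \<circ> G) (at y) = frechet_derivative F (at (G y)) \<circ> frechet_derivative G (at y)"
proof -
  have "G differentiable at y" "F differentiable at (G y)" for y
    using holo_on_frechet_derivative(1)[OF G] holo_on_frechet_derivative(1)[OF F]
    by (auto simp: differentiable_def)
  then show derivative: "frechet_derivative (F \<circ> G) (at y) = frechet_derivative F (at (G y)) \<circ> frechet_derivative G (at y)" for y
    by (rule frechet_derivative_compose)
  show "holo_on (F \<circ> G) UNIV"
    unfolding holo_on_def
  proof (intro conjI open_UNIV ballI exI)
    fix y
    show "((F \<circ> G) has_derivative frechet_derivative (F \<circ> G) (at y)) (at y)"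
      unfolding derivative
      by (rule diff_chain_at[OF holo_on_frechet_derivative(1)[OF G] holo_on_frechet_derivative(1)[OF F]])
    show "\<forall>c v. frechet_derivative (F \<circ> G) (at y) (c *s v) = c *s frechet_derivative (F \<circ> G) (at y) v"
      by (simp add: derivative holo_on_frechet_derivative(2)[OF F] holo_on_frechet_derivative(2)[OF G])
  qed
qed

lemma biholomorphic_frechet_derivative_inv:
  assumes "biholomorphic F"
  shows "frechet_derivative F (at (inv F y)) (frechet_derivative (inv F) (at y) v) = v"
proof -
  have F: "holo_on F UNIV" and Finv: "holo_on (inv F) UNIV" and "bij F"
    using assms by (auto simp: biholomorphic_def)
  then have "F \<circ> inv F = id"
    by (meson bij_is_surj surj_iff)
  then show ?thesis
    using holo_on_compose(2)[OF F Finv, of y] by (metis comp_apply frechet_derivative_id id_apply)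
qed

lemma biholomorphic_surj_frechet_derivative:
  assumes "biholomorphic F"
  shows "surj (frechet_derivative F (at z))"
proof -
  have "inv F (F z) = z"
    using assms by (simp add: biholomorphic_def bij_is_inj)
  then have "frechet_derivative F (at z) (frechet_derivative (inv F) (at (F z)) v) = v" for v
    using biholomorphic_frechet_derivative_inv[OF assms, of "F z" v] by simp
  then show ?thesis
    by (metis surjI)
qed

lemma holo_on_has_field_derivative_line:
  fixes F :: "complex ^ 'n \<Rightarrow> complex ^ 'm"
  assumes "holo_on F UNIV"
  shows "((\<lambda>t. F (w + t *s e) $ k) has_field_derivative frechet_derivative F (at (w + t *s e)) e $ k) (at t)"
proof -
  have "((\<lambda>t. w + t *s e) has_derivative (\<lambda>h. h *s e)) (at t)"
    using bounded_linear_vector_smult_left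
    by (auto intro!: derivative_eq_intros bounded_linear_imp_has_derivative)
  from has_derivative_compose[OF this holo_on_frechet_derivative(1)[OF assms]]
  have "((\<lambda>t. F (w + t *s e)) has_derivative (\<lambda>h. h *s frechet_derivative F (at (w + t *s e)) e)) (at t)"
    by (simp add: o_def holo_on_frechet_derivative(2)[OF assms])
  from bounded_linear.has_derivative[OF bounded_linear_vec_nth this, of k]
  show ?thesis
    unfolding has_field_derivative_def by (simp add: mult.commute[of _ "frechet_derivative F _ e $ k"])
qed

lemma holo_on_line_holomorphic:
  fixes F :: "complex ^ 'n \<Rightarrow> complex ^ 'm"
  assumes "holo_on F UNIV"
  shows "(\<lambda>t. F (w + t *s e) $ k) holomorphic_on UNIV"
  using holo_on_has_field_derivative_line[OF assms]
  unfolding holomorphic_on_def field_differentiable_def by blast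

lemma holo_on_frechet_derivative_line_holomorphic:
  fixes F :: "complex ^ 'n \<Rightarrow> complex ^ 'm"
  assumes F: "holo_on F UNIV"
  shows "(\<lambda>s. frechet_derivative F (at (z + s *s a)) b $ k) holomorphic_on UNIV"
proof -
  define \<Phi> where "\<Phi> = (\<lambda>s t. F (z + s *s a + t *s b) $ k)"
  have "continuous_on UNIV F"
    using holo_on_frechet_derivative(1)[OF F]
    by (meson continuous_at_imp_continuous_on has_derivative_continuous)
  then have "continuous_on UNIV (\<lambda>(s,t). \<Phi> s t)"
    unfolding \<Phi>_def case_prod_unfold
    by (intro continuous_on_compose2[OF bounded_linear.continuous_on[OF bounded_linear_vec_nth]]
          continuous_intros bounded_linear.continuous_on[OF bounded_linear_vector_smult_left]) auto
  moreover have "(\<lambda>s. \<Phi> s t) holomorphic_on UNIV" "\<Phi> s holomorphic_on UNIV" for s t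
    using holo_on_line_holomorphic[OF F, of "z + t *s b" a k] holo_on_line_holomorphic[OF F, of "z + s *s a" b k]
    by (simp_all add: \<Phi>_def add_ac)
  moreover have "deriv (\<Phi> s) 0 = frechet_derivative F (at (z + s *s a)) b $ k" for s
    using DERIV_imp_deriv[OF holo_on_has_field_derivative_line[OF F, of "z + s *s a" b k 0]]
    by (simp add: \<Phi>_def)
  ultimately show ?thesis
    using separately_holomorphic_deriv_holomorphic[of \<Phi> 0] by simp
qed

lemma has_vector_derivative_line:
  fixes F :: "'a::real_normed_vector \<Rightarrow> 'b::real_normed_vector"
  assumes "(F has_derivative F') (at (w + t *\<^sub>R v))" "linear F'"
  shows "((\<lambda>t. F (w + t *\<^sub>R v)) has_vector_derivative F' v) (at t)"
proof -
  have "((\<lambda>t. w + t *\<^sub>R v) has_derivative (\<lambda>h. h *\<^sub>R v)) (at t)"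
    by (auto intro!: derivative_eq_intros)
  from has_derivative_compose[OF this assms(1)] show ?thesis
    unfolding has_vector_derivative_def by (simp add: o_def linear_scale[OF assms(2)])
qed

lemma has_vector_derivative_vec_componentwise:
  fixes f :: "real \<Rightarrow> 'a::real_normed_vector ^ 'n"
  assumes "\<And>k. ((\<lambda>t. f t $ k) has_vector_derivative d $ k) (at t)"
  shows "(f has_vector_derivative d) (at t)"
proof -
  have "((\<lambda>y. (1 / norm (y - t)) *\<^sub>R (f y $ k - (f t $ k + (y - t) *\<^sub>R d $ k))) \<longlongrightarrow> 0) (at t)" for k
    using assms[of k] unfolding has_vector_derivative_def has_derivative_within[where s=UNIV, simplified] by simp
  then have "((\<lambda>y. (1 / norm (y - t)) *\<^sub>R (f y - (f t + (y - t) *\<^sub>R d))) \<longlongrightarrow> 0) (at t)"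
    by (intro vec_tendstoI) simp
  then show ?thesis
    unfolding has_vector_derivative_def has_derivative_within[where s=UNIV, simplified]
    by (simp add: bounded_linear_scaleR_left)
qed

lemma has_vector_derivative_frechet_derivative_line:
  fixes F :: "complex ^ 'n \<Rightarrow> complex ^ 'm"
  assumes F: "holo_on F UNIV"
  shows "((\<lambda>t. frechet_derivative F (at (z + t *\<^sub>R (c *s a))) (d *s b)) has_vector_derivative
      (c * d) *s (\<chi> k. deriv (\<lambda>\<sigma>. frechet_derivative F (at (z + \<sigma> *s a)) b $ k) 0)) (at 0)"
proof (rule has_vector_derivative_vec_componentwise)
  fix k
  define \<Psi> where "\<Psi> = (\<lambda>\<sigma>. frechet_derivative F (at (z + \<sigma> *s a)) b $ k)"
  have "\<Psi> holomorphic_on UNIV"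
    unfolding \<Psi>_def by (rule holo_on_frechet_derivative_line_holomorphic[OF F])
  then have d\<Psi>: "(\<Psi> has_field_derivative deriv \<Psi> \<sigma>) (at \<sigma>)" for \<sigma>
    by (rule holomorphic_derivI) auto
  have "((\<lambda>\<sigma>. d * \<Psi> (\<sigma> * c)) has_field_derivative d * (deriv \<Psi> (0 * c) * c)) (at 0)"
    by (intro DERIV_cmult DERIV_chain2[OF d\<Psi>]) (auto intro!: derivative_eq_intros)
  then have "((\<lambda>t. d * \<Psi> (of_real t * c)) has_vector_derivative d * (deriv \<Psi> 0 * c)) (at 0)"
    using has_vector_derivative_real_field[of "\<lambda>\<sigma>. d * \<Psi> (\<sigma> * c)" _ 0] by simp
  moreover have "frechet_derivative F (at (z + t *\<^sub>R (c *s a))) (d *s b) $ k = d * \<Psi> (of_real t * c)" for t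
    by (simp add: \<Psi>_def holo_on_frechet_derivative(2)[OF F] scaleR_eq_of_real_smult vector_smult_assoc)
  ultimately show "((\<lambda>t. frechet_derivative F (at (z + t *\<^sub>R (c *s a))) (d *s b) $ k) has_vector_derivative
      ((c * d) *s (\<chi> k. deriv (\<lambda>\<sigma>. frechet_derivative F (at (z + \<sigma> *s a)) b $ k) 0)) $ k) (at 0)"
    by (simp add: \<Psi>_def algebra_simps)
qed

section \<open>The Levi matrix of log \<parallel>F\<parallel>\<close>

definition hinner :: "complex ^ 'n \<Rightarrow> complex ^ 'n \<Rightarrow> complex" where
  "hinner x y = (\<Sum>k\<in>UNIV. x $ k * cnj (y $ k))"

lemma inner_eq_Re_hinner: "inner x y = Re (hinner x y)"
  by (simp add: hinner_def inner_vec_def inner_complex_def Re_sum)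

lemma hinner_smult_left [simp]: "hinner (c *s x) y = c * hinner x y"
  by (simp add: hinner_def sum_distrib_left mult.assoc)

lemma hinner_smult_right [simp]: "hinner x (c *s y) = cnj c * hinner x y"
  by (simp add: hinner_def sum_distrib_left algebra_simps)

lemma hinner_commute: "hinner y x = cnj (hinner x y)"
  by (simp add: hinner_def cnj_sum mult.commute)

lemma hinner_self: "hinner x x = of_real (inner x x)"
proof -
  have "x $ k * cnj (x $ k) = of_real (Re (x $ k) * Re (x $ k) + Im (x $ k) * Im (x $ k))" for k
    by (simp add: complex_eq_iff)
  then show ?thesis
    by (simp add: hinner_def inner_vec_def inner_complex_def)
qed

lemma hinner_zero_right [simp]: "hinner x 0 = 0"
  by (simp add: hinner_def)

lemma hinner_self_eq_0_iff [simp]: "hinner x x = 0 \<longleftrightarrow> x = 0"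
  by (simp add: hinner_self)

lemma hinner_sum_left: "hinner (\<Sum>j\<in>S. f j) y = (\<Sum>j\<in>S. hinner (f j) y)"
  by (simp add: hinner_def sum_component sum_distrib_right sum.swap[of _ S])

lemma hinner_sum_right: "hinner x (\<Sum>j\<in>S. f j) = (\<Sum>j\<in>S. hinner x (f j))"
  by (simp add: hinner_def sum_component cnj_sum sum_distrib_left sum.swap[of _ S])

lemma hinner_diff_right: "hinner x (y - w) = hinner x y - hinner x w"
  by (simp add: hinner_def algebra_simps sum_subtractf)

lemma has_real_derivative_ln_norm:
  fixes \<phi> :: "real \<Rightarrow> 'a::real_inner"
  assumes \<phi>: "(\<phi> has_vector_derivative d) (at t)" and nonzero: "\<phi> t \<noteq> 0"
  shows "((\<lambda>t. ln (norm (\<phi> t))) has_real_derivative inner (\<phi> t) d / inner (\<phi> t) (\<phi> t)) (at t)"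
proof -
  have "((\<lambda>t. inner (\<phi> t) (\<phi> t)) has_real_derivative 2 * inner (\<phi> t) d) (at t)"
    using has_derivative_inner[OF \<phi>[unfolded has_vector_derivative_def] \<phi>[unfolded has_vector_derivative_def]]
    by (simp add: has_field_derivative_def inner_commute algebra_simps mult_commute_abs)
  from DERIV_cdivide[OF DERIV_chain2[OF DERIV_ln this], of 2]
  have "((\<lambda>t. ln (inner (\<phi> t) (\<phi> t)) / 2) has_real_derivative inner (\<phi> t) d / inner (\<phi> t) (\<phi> t)) (at t)"
    using nonzero by (simp add: field_simps)
  moreover have "(\<lambda>t. ln (norm (\<phi> t))) = (\<lambda>t. ln (inner (\<phi> t) (\<phi> t)) / 2)"
  proof
    fix t
    show "ln (norm (\<phi> t)) = ln (inner (\<phi> t) (\<phi> t)) / 2"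
      by (cases "\<phi> t = 0") (simp_all add: ln_sqrt norm_eq_sqrt_inner)
  qed
  ultimately show ?thesis
    by simp
qed

lemma dirderiv_ln_norm:
  fixes F :: "complex ^ 'n \<Rightarrow> 'a::real_inner"
  assumes "(F has_derivative F') (at w)" and "F w \<noteq> 0"
  shows "dirderiv v (\<lambda>w. ln (norm (F w))) w = inner (F w) (F' v) / inner (F w) (F w)"
proof -
  have "((\<lambda>t. F (w + t *\<^sub>R v)) has_vector_derivative F' v) (at 0)"
    using assms(1) has_derivative_linear[OF assms(1)] by (intro has_vector_derivative_line) simp_all
  from has_real_derivative_ln_norm[OF this] show ?thesis
    unfolding dirderiv_def using assms(2) by (simp add: DERIV_imp_deriv)
qed

lemma eventually_dirderiv_ln_norm:
  fixes F :: "complex ^ 'n \<Rightarrow> 'a::real_inner"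
  assumes F: "\<And>w. (F has_derivative F' w) (at w)" and "F z \<noteq> 0"
  shows "\<forall>\<^sub>F t in nhds 0. dirderiv v (\<lambda>w. ln (norm (F w))) (z + t *\<^sub>R u)
    = inner (F (z + t *\<^sub>R u)) (F' (z + t *\<^sub>R u) v) / inner (F (z + t *\<^sub>R u)) (F (z + t *\<^sub>R u))"
proof -
  have "isCont (\<lambda>t. z + t *\<^sub>R u) 0"
    by (intro continuous_intros)
  then have "isCont (\<lambda>t. F (z + t *\<^sub>R u)) 0"
    using has_derivative_continuous[OF F] by (rule isCont_o2)
  then have "((\<lambda>t. F (z + t *\<^sub>R u)) \<longlongrightarrow> F z) (nhds 0)"
    using tendsto_at_iff_tendsto_nhds[of "\<lambda>t. F (z + t *\<^sub>R u)" 0] by (simp add: isCont_def)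
  then have "\<forall>\<^sub>F t in nhds 0. F (z + t *\<^sub>R u) \<noteq> 0"
    using \<open>F z \<noteq> 0\<close> by (rule tendsto_imp_eventually_ne)
  then show ?thesis
    by eventually_elim (simp add: dirderiv_ln_norm[OF F])
qed

lemma dirderiv2_ln_norm:
  fixes F :: "complex ^ 'n \<Rightarrow> complex ^ 'm" and z a b :: "complex ^ 'n" and c d :: complex
  assumes F: "holo_on F UNIV" and nonzero: "F z \<noteq> 0"
  defines "DF \<equiv> frechet_derivative F (at z)"
    and "H \<equiv> \<chi> k. deriv (\<lambda>\<sigma>. frechet_derivative F (at (z + \<sigma> *s a)) b $ k) 0"
    and "N \<equiv> inner (F z) (F z)"
  shows "dirderiv (c *s a) (dirderiv (d *s b) (\<lambda>w. ln (norm (F w)))) z =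
    (inner (DF (c *s a)) (DF (d *s b)) + inner (F z) ((c * d) *s H)) / N
     - 2 * inner (F z) (DF (d *s b)) * inner (F z) (DF (c *s a)) / N^2"
proof -
  define u v where "u = c *s a" and "v = d *s b"
  define \<phi> where "\<phi> = (\<lambda>t. F (z + t *\<^sub>R u))"
  define \<psi> where "\<psi> = (\<lambda>t. frechet_derivative F (at (z + t *\<^sub>R u)) v)"
  have d\<phi>: "(\<phi> has_vector_derivative DF u) (at 0)"
    unfolding \<phi>_def DF_def using holo_on_frechet_derivative(1)[OF F, of z]
    by (intro has_vector_derivative_line) (simp_all add: has_derivative_linear)
  have d\<psi>: "(\<psi> has_vector_derivative (c * d) *s H) (at 0)"
    unfolding \<psi>_def u_def v_def H_def by (rule has_vector_derivative_frechet_derivative_line[OF F])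
  have num: "((\<lambda>t. inner (\<phi> t) (\<psi> t)) has_real_derivative inner (F z) ((c * d) *s H) + inner (DF u) (DF v)) (at 0)"
    using has_derivative_inner[OF d\<phi>[unfolded has_vector_derivative_def] d\<psi>[unfolded has_vector_derivative_def]]
    by (simp add: has_field_derivative_def \<phi>_def \<psi>_def DF_def add.commute mult_commute_abs
        flip: distrib_left[where 'a = real])
  have den: "((\<lambda>t. inner (\<phi> t) (\<phi> t)) has_real_derivative 2 * inner (F z) (DF u)) (at 0)"
    using has_derivative_inner[OF d\<phi>[unfolded has_vector_derivative_def] d\<phi>[unfolded has_vector_derivative_def]]
    by (simp add: has_field_derivative_def \<phi>_def inner_commute algebra_simps mult_commute_abs)
  have quotient: "((\<lambda>t. inner (\<phi> t) (\<psi> t) / inner (\<phi> t) (\<phi> t)) has_real_derivative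
      ((inner (F z) ((c * d) *s H) + inner (DF u) (DF v)) * N - inner (F z) (DF v) * (2 * inner (F z) (DF u)))
        / (N * N)) (at 0)"
    using DERIV_divide[OF num den] nonzero by (simp add: \<phi>_def \<psi>_def DF_def N_def)
  have eventually_eq: "\<forall>\<^sub>F t in nhds 0. dirderiv v (\<lambda>w. ln (norm (F w))) (z + t *\<^sub>R u) = inner (\<phi> t) (\<psi> t) / inner (\<phi> t) (\<phi> t)"
    unfolding \<phi>_def \<psi>_def by (rule eventually_dirderiv_ln_norm[OF holo_on_frechet_derivative(1)[OF F] nonzero])
  have "((\<lambda>t. dirderiv v (\<lambda>w. ln (norm (F w))) (z + t *\<^sub>R u)) has_real_derivative
      ((inner (F z) ((c * d) *s H) + inner (DF u) (DF v)) * N - inner (F z) (DF v) * (2 * inner (F z) (DF u)))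
        / (N * N)) (at 0)"
    using DERIV_cong_ev[OF refl eventually_eq refl] quotient by (rule iffD2)
  then show ?thesis
    using nonzero unfolding dirderiv_def[of u] u_def[symmetric] v_def[symmetric]
    by (simp add: DERIV_imp_deriv N_def field_simps power2_eq_square)
qed

lemma dirderiv2_ln_norm_hinner:
  fixes F :: "complex ^ 'n \<Rightarrow> complex ^ 'm" and z a b :: "complex ^ 'n" and c d :: complex
  assumes F: "holo_on F UNIV" and nonzero: "F z \<noteq> 0"
  defines "DF \<equiv> frechet_derivative F (at z)"
    and "H \<equiv> \<chi> k. deriv (\<lambda>\<sigma>. frechet_derivative F (at (z + \<sigma> *s a)) b $ k) 0"
    and "N \<equiv> inner (F z) (F z)"
  shows "dirderiv (c *s a) (dirderiv (d *s b) (\<lambda>w. ln (norm (F w)))) z =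
    (Re (c * cnj d * hinner (DF a) (DF b)) + Re (cnj (c * d) * hinner (F z) H)) / N
     - 2 * Re (cnj d * hinner (F z) (DF b)) * Re (cnj c * hinner (F z) (DF a)) / N^2"
proof -
  have DF_smult: "DF (e *s v) = e *s DF v" for e v
    by (simp add: DF_def holo_on_frechet_derivative(2)[OF F])
  have "inner (DF (c *s a)) (DF (d *s b)) = Re (c * cnj d * hinner (DF a) (DF b))"
    by (simp add: DF_smult inner_eq_Re_hinner algebra_simps)
  moreover have "inner (F z) ((c * d) *s H) = Re (cnj (c * d) * hinner (F z) H)"
    by (simp only: inner_eq_Re_hinner hinner_smult_right)
  moreover have "inner (F z) (DF (e *s v)) = Re (cnj e * hinner (F z) (DF v))" for e v
    by (simp only: DF_smult inner_eq_Re_hinner hinner_smult_right)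
  ultimately show ?thesis
    using dirderiv2_ln_norm[OF F nonzero, where a = a and b = b and c = c and d = d]
    unfolding DF_def[symmetric] H_def[symmetric] N_def[symmetric] by simp
qed

text \<open>Here D c d is the real second derivative of log \<parallel>F\<parallel> in the directions c e_i and d e_j. The term P
  comes from the complex second derivative of F and cancels: this is where holomorphy of F enters.\<close>
lemma levi_combination_of_real_hessian:
  fixes C P Bi Bj :: complex and N :: real
  assumes "N > 0"
  defines "D \<equiv> \<lambda>c1 c2. (Re (c1 * cnj c2 * C) + Re (cnj (c1 * c2) * P)) / N
      - 2 * Re (cnj c2 * Bj) * Re (cnj c1 * Bi) / N^2"
  shows "1/4 * (of_real (D 1 1 + D \<i> \<i>) + \<i> * of_real (D 1 \<i> - D \<i> 1))
    = (C * of_real N - cnj Bi * Bj) / (2 * of_real N ^ 2)"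
  using assms by (simp add: D_def complex_eq_iff field_simps power2_eq_square)

definition log_norm_levi_matrix :: "(complex ^ 'n \<Rightarrow> complex ^ 'm) \<Rightarrow> complex ^ 'm \<Rightarrow> complex ^ 'n ^ 'n" where
  "log_norm_levi_matrix A a = (\<chi> i j.
     (hinner (A (axis i 1)) (A (axis j 1)) * hinner a a - hinner (A (axis i 1)) a * hinner a (A (axis j 1)))
       / (2 * (hinner a a)^2))"

lemma levi_ln_norm:
  fixes F :: "complex ^ 'n \<Rightarrow> complex ^ 'm"
  assumes F: "holo_on F UNIV" and nonzero: "F z \<noteq> 0"
  shows "levi (\<lambda>w. ln (norm (F w))) z = log_norm_levi_matrix (frechet_derivative F (at z)) (F z)"
proof -
  define DF where "DF = frechet_derivative F (at z)"
  define N where "N = inner (F z) (F z)"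
  have "N > 0" using nonzero by (simp add: N_def)
  have "levi (\<lambda>w. ln (norm (F w))) z $ i $ j = log_norm_levi_matrix DF (F z) $ i $ j" for i j
  proof -
    define H where "H = (\<chi> k. deriv (\<lambda>\<sigma>. frechet_derivative F (at (z + \<sigma> *s axis i 1)) (axis j 1) $ k) 0)"
    define C where "C = hinner (DF (axis i 1)) (DF (axis j 1))"
    define Bi where "Bi = hinner (F z) (DF (axis i 1))"
    define Bj where "Bj = hinner (F z) (DF (axis j 1))"
    define P where "P = hinner (F z) H"
    define D where "D = (\<lambda>c1 c2. dirderiv (c1 *s axis i 1) (dirderiv (c2 *s axis j 1) (\<lambda>w. ln (norm (F w)))) z)"
    have D: "D c1 c2 = (Re (c1 * cnj c2 * C) + Re (cnj (c1 * c2) * P)) / N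
        - 2 * Re (cnj c2 * Bj) * Re (cnj c1 * Bi) / N^2" for c1 c2
      unfolding D_def C_def P_def Bi_def Bj_def H_def DF_def N_def by (rule dirderiv2_ln_norm_hinner[OF F nonzero])
    have "axis k \<i> = \<i> *s axis k 1" for k :: 'n
      by (simp add: vec_eq_iff axis_def)
    then have "levi (\<lambda>w. ln (norm (F w))) z $ i $ j = 1/4 * (of_real (D 1 1 + D \<i> \<i>) + \<i> * of_real (D 1 \<i> - D \<i> 1))"
      by (simp add: levi_def D_def)
    also have "\<dots> = (C * of_real N - cnj Bi * Bj) / (2 * of_real N ^ 2)"
      unfolding D by (rule levi_combination_of_real_hessian[OF \<open>N > 0\<close>])
    also have "\<dots> = log_norm_levi_matrix DF (F z) $ i $ j"
      by (simp add: log_norm_levi_matrix_def C_def Bi_def Bj_def N_def hinner_self flip: hinner_commute)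
    finally show ?thesis .
  qed
  then show ?thesis
    by (simp add: vec_eq_iff DF_def)
qed

lemma log_norm_levi_matrix_mult_cnj:
  fixes A :: "complex ^ 'n \<Rightarrow> complex ^ 'm"
  assumes A: "Vector_Spaces.linear (*s) (*s) A"
  shows "(log_norm_levi_matrix A a *v (\<chi> j. cnj (x $ j))) $ i
    = hinner (A (axis i 1)) (hinner a a *s A x - hinner (A x) a *s a) / (2 * (hinner a a)^2)"
proof -
  define n where "n = hinner a a"
  have Ax: "A x = (\<Sum>j\<in>UNIV. x $ j *s A (axis j 1))"
    by (rule clinear_expansion[OF A])
  have "(log_norm_levi_matrix A a *v (\<chi> j. cnj (x $ j))) $ i
      = (\<Sum>j\<in>UNIV. (hinner (A (axis i 1)) (A (axis j 1)) * n - hinner (A (axis i 1)) a * hinner a (A (axis j 1)))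
          * cnj (x $ j)) / (2 * n^2)"
    by (simp add: log_norm_levi_matrix_def matrix_vector_mult_def n_def sum_divide_distrib)
  also have "\<dots> = (n * hinner (A (axis i 1)) (A x) - hinner (A (axis i 1)) a * hinner a (A x)) / (2 * n^2)"
    by (simp add: Ax hinner_sum_right algebra_simps sum_subtractf sum_distrib_left)
  also have "\<dots> = hinner (A (axis i 1)) (n *s A x - hinner (A x) a *s a) / (2 * n^2)"
    by (simp add: n_def hinner_diff_right mult.commute flip: hinner_commute)
  finally show ?thesis
    by (simp add: n_def)
qed

lemma log_norm_levi_matrix_kernel:
  fixes A :: "complex ^ 'n \<Rightarrow> complex ^ 'm"
  assumes A: "Vector_Spaces.linear (*s) (*s) A" and "surj A" and "a \<noteq> 0"
  shows "log_norm_levi_matrix A a *v (\<chi> j. cnj (x $ j)) = 0 \<longleftrightarrow> (\<exists>c. A x = c *s a)"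
proof -
  define p where "p = hinner a a *s A x - hinner (A x) a *s a"
  \<comment> \<open>Since A is onto, the A e_i span the target space.\<close>
  have "(\<forall>i. hinner (A (axis i 1)) p = 0) \<longleftrightarrow> p = 0"
  proof
    assume orthogonal: "\<forall>i. hinner (A (axis i 1)) p = 0"
    obtain y where y: "A y = p"
      using \<open>surj A\<close> by (metis surjD)
    have "hinner p p = hinner (\<Sum>j\<in>UNIV. y $ j *s A (axis j 1)) p"
      by (simp flip: y clinear_expansion[OF A])
    also have "\<dots> = (\<Sum>j\<in>UNIV. y $ j * hinner (A (axis j 1)) p)"
      by (simp add: hinner_sum_left)
    finally have "hinner p p = 0"
      using orthogonal by simp
    then show "p = 0"
      by simp
  qed simp
  moreover have "p = 0 \<longleftrightarrow> (\<exists>c. A x = c *s a)"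
  proof
    assume "p = 0"
    then have eq: "hinner a a *s A x = hinner (A x) a *s a"
      by (simp add: p_def)
    have "A x = inverse (hinner a a) *s (hinner a a *s A x)"
      using \<open>a \<noteq> 0\<close> by (simp add: vector_smult_assoc)
    also have "\<dots> = (hinner (A x) a / hinner a a) *s a"
      by (simp add: eq vector_smult_assoc divide_inverse mult.commute)
    finally show "\<exists>c. A x = c *s a" ..
  qed (auto simp: p_def vector_smult_assoc mult.commute)
  moreover have "log_norm_levi_matrix A a *v (\<chi> j. cnj (x $ j)) = 0 \<longleftrightarrow> (\<forall>i. hinner (A (axis i 1)) p = 0)"
    using \<open>a \<noteq> 0\<close> by (auto simp: vec_eq_iff log_norm_levi_matrix_mult_cnj[OF A] simp flip: p_def)
  ultimately show ?thesis
    by blast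
qed

section \<open>Injectivity of X0\<close>

lemma Aut0_holD:
  assumes "F \<in> Aut0_hol"
  shows "holo_on F UNIV" "bij F" "F 0 = 0" "frechet_derivative F (at 0) = id"
  using assms frechet_derivative_at[of F id 0]
  by (auto simp: Aut0_hol_def biholomorphic_def)

lemma Aut0_hol_nonzero:
  assumes "F \<in> Aut0_hol" and "z \<noteq> 0"
  shows "F z \<noteq> 0"
  using Aut0_holD(2,3)[OF assms(1)] assms(2) by (metis bij_is_inj injD)

lemma Aut0_hol_comp_inv:
  assumes F: "F \<in> Aut0_hol" and G: "G \<in> Aut0_hol"
  shows "F \<circ> inv G \<in> Aut0_hol"
proof -
  have "biholomorphic F" "biholomorphic G" "bij F" "bij G"
    using F G by (auto simp: Aut0_hol_def biholomorphic_def)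
  then have holo: "holo_on F UNIV" "holo_on (inv F) UNIV" "holo_on G UNIV" "holo_on (inv G) UNIV"
    by (auto simp: biholomorphic_def)
  have "inv (F \<circ> inv G) = G \<circ> inv F"
    using \<open>bij F\<close> \<open>bij G\<close> by (simp add: o_inv_distrib bij_imp_bij_inv inv_inv_eq)
  then have "biholomorphic (F \<circ> inv G)"
    using holo \<open>bij F\<close> \<open>bij G\<close>
    by (simp add: biholomorphic_def holo_on_compose(1) bij_comp bij_imp_bij_inv)
  have "inv G 0 = 0"
    using G \<open>bij G\<close> by (metis Aut0_holD(3) bij_inv_eq_iff)
  have "frechet_derivative (inv G) (at 0) = id"
    using biholomorphic_frechet_derivative_inv[OF \<open>biholomorphic G\<close>, of 0] Aut0_holD(4)[OF G]
    by (auto simp: \<open>inv G 0 = 0\<close>)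
  then have "((F \<circ> inv G) has_derivative id) (at 0)"
    using holo_on_compose[OF holo(1) holo(4)] holo_on_frechet_derivative(1)
    by (metis Aut0_holD(4)[OF F] \<open>inv G 0 = 0\<close> comp_id)
  with \<open>biholomorphic (F \<circ> inv G)\<close> \<open>inv G 0 = 0\<close> show ?thesis
    using Aut0_holD(3)[OF F] by (simp add: Aut0_hol_def)
qed

lemma curve_euler_parallel_imp_in_line:
  fixes \<Gamma> V :: "complex \<Rightarrow> complex ^ 'n"
  assumes deriv: "\<And>k t. ((\<lambda>t. \<Gamma> t $ k) has_field_derivative V t $ k) (at t)"
    and "\<Gamma> 0 = 0" and "V 0 $ j \<noteq> 0"
    and parallel: "\<And>t. t \<noteq> 0 \<Longrightarrow> \<exists>c. t *s V t = c *s \<Gamma> t"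
  shows "\<Gamma> t = (\<Gamma> t $ j / V 0 $ j) *s V 0"
proof -
  have wronskian: "\<Gamma> t $ k * V t $ j - \<Gamma> t $ j * V t $ k = 0" for t k
  proof (cases "t = 0")
    case False
    then obtain c where "t *s V t = c *s \<Gamma> t"
      using parallel by blast
    then have j_eq: "t * V t $ j = c * \<Gamma> t $ j" and k_eq: "t * V t $ k = c * \<Gamma> t $ k"
      by (metis vector_smult_component)+
    have "t * (\<Gamma> t $ k * V t $ j - \<Gamma> t $ j * V t $ k) = \<Gamma> t $ k * (t * V t $ j) - \<Gamma> t $ j * (t * V t $ k)"
      by (simp add: algebra_simps)
    also have "\<dots> = 0"
      by (simp add: j_eq k_eq)
    finally have "t * (\<Gamma> t $ k * V t $ j - \<Gamma> t $ j * V t $ k) = 0" .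
    with False show ?thesis by simp
  qed (simp add: \<open>\<Gamma> 0 = 0\<close>)
  have "V 0 $ j * \<Gamma> t $ k = V 0 $ k * \<Gamma> t $ j" for k
    by (rule wronskian_zero_imp_proportional[OF deriv deriv]) (use \<open>\<Gamma> 0 = 0\<close> \<open>V 0 $ j \<noteq> 0\<close> wronskian in simp_all)
  then show ?thesis
    using \<open>V 0 $ j \<noteq> 0\<close> by (simp add: vec_eq_iff field_simps)
qed

lemma Aut0_hol_euler_parallel_eq_id:
  assumes K: "K \<in> Aut0_hol"
    and parallel: "\<And>y. y \<noteq> 0 \<Longrightarrow> \<exists>c. frechet_derivative K (at y) y = c *s K y"
  shows "K w = w"
proof (cases "w = 0")
  case False
  note holo = Aut0_holD(1)[OF K]
  define \<Gamma> where "\<Gamma> = (\<lambda>t. K (t *s w))"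
  define V where "V = (\<lambda>t. frechet_derivative K (at (t *s w)) w)"
  obtain j where j: "w $ j \<noteq> 0"
    using False by (auto simp: vec_eq_iff)
  define \<phi> where "\<phi> = (\<lambda>t. \<Gamma> t $ j / w $ j)"
  have deriv: "((\<lambda>t. \<Gamma> t $ k) has_field_derivative V t $ k) (at t)" for k t
    using holo_on_has_field_derivative_line[OF holo, of 0 w k t] by (simp add: \<Gamma>_def V_def)
  have V0: "V 0 = w"
    using Aut0_holD(4)[OF K] by (simp add: V_def)
  have "\<exists>c. t *s V t = c *s \<Gamma> t" if "t \<noteq> 0" for t
    using parallel[of "t *s w"] that False
    by (simp add: V_def \<Gamma>_def holo_on_frechet_derivative(2)[OF holo, symmetric])
  moreover have "\<Gamma> 0 = 0"
    using Aut0_holD(3)[OF K] by (simp add: \<Gamma>_def)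
  ultimately have line: "\<Gamma> t = \<phi> t *s w" for t
    using curve_euler_parallel_imp_in_line[OF deriv, of j] j by (simp add: V0 \<phi>_def)
  have deriv_\<phi>: "(\<phi> has_field_derivative V t $ j / w $ j) (at t)" for t
    unfolding \<phi>_def by (rule DERIV_cdivide[OF deriv])
  then have holo_\<phi>: "\<phi> holomorphic_on UNIV"
    by (auto simp: holomorphic_on_def field_differentiable_def intro: has_field_derivative_at_within)
  have deriv_\<phi>_0: "(\<phi> has_field_derivative 1) (at 0)"
    using deriv_\<phi>[of 0] j by (simp add: V0)
  have inj_\<phi>: "inj \<phi>"
  proof (rule injI)
    fix s t
    assume "\<phi> s = \<phi> t"
    then have "K (s *s w) = K (t *s w)"
      using line by (metis \<Gamma>_def)
    then have "s *s w = t *s w"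
      by (rule injD[OF bij_is_inj[OF Aut0_holD(2)[OF K]]])
    with False show "s = t"
      by simp
  qed
  have "\<phi> 0 = 0"
    using \<open>\<Gamma> 0 = 0\<close> by (simp add: \<phi>_def)
  then have "\<phi> 1 = 1"
    using entire_inj_tangent_to_id_eq_id[OF holo_\<phi> inj_\<phi> _ deriv_\<phi>_0] by blast
  then show ?thesis
    using line[of 1] by (simp add: \<Gamma>_def)
qed (use Aut0_holD(3)[OF K] in simp)

lemma X0_eq_imp_euler_parallel:
  assumes F: "F \<in> Aut0_hol" and G: "G \<in> Aut0_hol" and X: "X0 F = X0 G" and "y \<noteq> 0"
  shows "\<exists>c. frechet_derivative (F \<circ> inv G) (at y) y = c *s (F \<circ> inv G) y"
proof -
  have biholo: "biholomorphic F" "biholomorphic G"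
    using F G by (simp_all add: Aut0_hol_def)
  define z where "z = inv G y"
  define x where "x = frechet_derivative (inv G) (at y) y"
  have "G z = y"
    using Aut0_holD(2)[OF G] by (simp add: z_def bij_is_surj surj_f_inv_f)
  then have "z \<noteq> 0"
    using Aut0_holD(3)[OF G] \<open>y \<noteq> 0\<close> by auto
  \<comment> \<open>By the chain rule, x lies in the kernel of the Levi matrix of log \<parallel>G\<parallel> at z.\<close>
  have "frechet_derivative G (at z) x = 1 *s G z"
    using biholomorphic_frechet_derivative_inv[OF biholo(2), of y y] \<open>G z = y\<close> by (simp add: x_def z_def)
  then have "log_norm_levi_matrix (frechet_derivative G (at z)) (G z) *v (\<chi> j. cnj (x $ j)) = 0"
    using log_norm_levi_matrix_kernel[OF holo_on_clinear_frechet_derivative biholomorphic_surj_frechet_derivative]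
      Aut0_holD(1)[OF G] biholo(2) Aut0_hol_nonzero[OF G \<open>z \<noteq> 0\<close>] by blast
  moreover have "levi (\<lambda>w. ln (norm (F w))) z = levi (\<lambda>w. ln (norm (G w))) z"
    using fun_cong[OF X, of z] \<open>z \<noteq> 0\<close> by (simp add: X0_def)
  ultimately have "log_norm_levi_matrix (frechet_derivative F (at z)) (F z) *v (\<chi> j. cnj (x $ j)) = 0"
    using Aut0_holD(1)[OF F] Aut0_holD(1)[OF G] Aut0_hol_nonzero[OF F \<open>z \<noteq> 0\<close>] Aut0_hol_nonzero[OF G \<open>z \<noteq> 0\<close>]
    by (simp add: levi_ln_norm)
  then obtain c where "frechet_derivative F (at z) x = c *s F z"
    using log_norm_levi_matrix_kernel[OF holo_on_clinear_frechet_derivative biholomorphic_surj_frechet_derivative]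
      Aut0_holD(1)[OF F] biholo(1) Aut0_hol_nonzero[OF F \<open>z \<noteq> 0\<close>] by blast
  moreover have "holo_on (inv G) UNIV"
    using biholo(2) by (simp add: biholomorphic_def)
  ultimately show ?thesis
    using holo_on_compose(2)[OF Aut0_holD(1)[OF F], of "inv G" y] by (auto simp: x_def z_def)
qed

theorem theorem3:
  shows "inj_on (X0 :: (complex ^ 'n \<Rightarrow> complex ^ 'n) \<Rightarrow> _) Aut0_hol"
proof (rule inj_onI)
  fix F G :: "complex ^ 'n \<Rightarrow> complex ^ 'n"
  assume F: "F \<in> Aut0_hol" and G: "G \<in> Aut0_hol" and X: "X0 F = X0 G"
  have "(F \<circ> inv G) y = y" for y
    by (rule Aut0_hol_euler_parallel_eq_id[OF Aut0_hol_comp_inv[OF F G] X0_eq_imp_euler_parallel[OF F G X]])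
  then have "F w = G w" for w
    using Aut0_holD(2)[OF G] by (metis bij_is_inj comp_apply inv_f_f)
  then show "F = G" ..
qed

end
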